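(* Let $\varphi:=\frac{16}{3}\mathbb{1}-2\sqrt5 f_{24}$ and $\widetilde\varphi(t):=\varphi(-t)$ on $\mathbb{Z}/24\mathbb{Z}$, and for $a:\mathbb{Z}/24\mathbb{Z}\to[0,\infty)$ let $\mathcal N(a):=\max(9\|a\|_\infty,\|a\|_1)$. Then for every $a:\mathbb{Z}/24\mathbb{Z}\to[0,\infty)$, $$\mathcal N\big((a*\varphi)_+\big)\le2\mathcal N(a)\quad\text{and}\quad \mathcal N\big((a*\widetilde\varphi)_+\big)\le2\mathcal N(a).$$
   Context: $\mathbb{1}$ is the constant function $1$ on $\mathbb{Z}/24\mathbb{Z}$; $f_{24}(t):=\#\{j\in\mathbb{Z}/24\mathbb{Z}:j^2\equiv t\ (\mathrm{mod}\ 24)\}$; $(a*\psi)(t):=\frac1{24}\sum_{j\in\mathbb{Z}/24\mathbb{Z}}a(j)\psi(t-j)$; $x_+:=\max(x,0)$ pointwise; $\|h\|_\infty:=\max_t|h(t)|$, $\|h\|_1:=\sum_t|h(t)|$. *)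

theory Defs
  imports "HOL-Analysis.Analysis" "HOL-Library.Numeral_Type"
begin

definition f24 :: "24 \<Rightarrow> real" where
  "f24 t = real (card {j :: 24. j ^ 2 = t})"

definition conv24 :: "(24 \<Rightarrow> real) \<Rightarrow> (24 \<Rightarrow> real) \<Rightarrow> 24 \<Rightarrow> real" where
  "conv24 a psi t = (1 / 24) * (\<Sum>j\<in>UNIV. a j * psi (t - j))"

definition pospart :: "(24 \<Rightarrow> real) \<Rightarrow> 24 \<Rightarrow> real" where
  "pospart h t = max (h t) 0"

definition sup_norm24 :: "(24 \<Rightarrow> real) \<Rightarrow> real" where
  "sup_norm24 h = Max (range (\<lambda>t. \<bar>h t\<bar>))"

definition l1_norm24 :: "(24 \<Rightarrow> real) \<Rightarrow> real" where
  "l1_norm24 h = (\<Sum>t\<in>UNIV. \<bar>h t\<bar>)"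

definition NN :: "(24 \<Rightarrow> real) \<Rightarrow> real" where
  "NN a = max (9 * sup_norm24 a) (l1_norm24 a)"

definition phi24 :: "24 \<Rightarrow> real" where
  "phi24 t = 16 / 3 - 2 * sqrt 5 * f24 t"

definition phi24_tilde :: "24 \<Rightarrow> real" where
  "phi24_tilde t = phi24 (- t)"

end

theory Submission
  imports Defs
begin

(* Since 2 sqrt 5 >= 22/5, phi is dominated by psi/15 for the integer-valued kernel
   psi = 80 - 66 f24, while phi <= 16/3 bounds the sup norm of (a * phi)_+ by 2/9 of the l1 norm
   of a.  For the l1 norm, a |-> sum_t ((a * psi)(t))_+ is convex and positively homogeneous, and
   the polytope {0 <= a <= 1, sum a <= 9} is the convex hull of the indicators of sets of at most
   9 points.  Scaling a by 9 / N(a) therefore reduces the claim to the bound 6480 at these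
   indicators, a finite computation; it is organised by residue classes mod 4 and checked against
   precomputed tables.  The statement for the reflected kernel follows by t |-> -t. *)

definition capped_simplex :: "nat \<Rightarrow> ('a::finite \<Rightarrow> real) set" where
  "capped_simplex m = {x. (\<forall>j. 0 \<le> x j \<and> x j \<le> 1) \<and> sum x UNIV \<le> real m}"

definition fractional_coords :: "('a \<Rightarrow> real) \<Rightarrow> 'a set" where
  "fractional_coords x = {j. 0 < x j \<and> x j < 1}"

lemma capped_simplex_split_two:
  fixes x :: "'a::finite \<Rightarrow> real"
  assumes x: "x \<in> capped_simplex m"
    and i: "i \<in> fractional_coords x" and i': "i' \<in> fractional_coords x" "i' \<noteq> i"
  obtains u y z where "0 \<le> u" "u \<le> 1" "x = (\<lambda>j. u * y j + (1 - u) * z j)"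
    "y \<in> capped_simplex m" "z \<in> capped_simplex m"
    "fractional_coords y \<subset> fractional_coords x" "fractional_coords z \<subset> fractional_coords x"
proof -
  define d :: "'a \<Rightarrow> real" where "d j = of_bool (j = i) - of_bool (j = i')" for j
  define tp where "tp = min (1 - x i) (x i')"
  define tm where "tm = min (x i) (1 - x i')"
  define y where "y j = x j + tp * d j" for j
  define z where "z j = x j - tm * d j" for j
  define u where "u = tm / (tp + tm)"
  have frac: "0 < x i" "x i < 1" "0 < x i'" "x i' < 1"
    using i i' unfolding fractional_coords_def by auto
  have box: "0 \<le> x j" "x j \<le> 1" for j
    using x unfolding capped_simplex_def by auto
  have tp: "0 < tp" and tm: "0 < tm"
    using frac unfolding tp_def tm_def by auto
  have "sum d UNIV = 0"
    unfolding d_def by (simp add: sum_subtractf)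
  then have "sum y UNIV = sum x UNIV" "sum z UNIV = sum x UNIV"
    unfolding y_def z_def by (simp_all add: sum.distrib sum_subtractf sum_distrib_left[symmetric])
  moreover have "0 \<le> y j \<and> y j \<le> 1" "0 \<le> z j \<and> z j \<le> 1" for j
    using box[of j] frac \<open>i' \<noteq> i\<close> unfolding y_def z_def d_def tp_def tm_def by (auto simp: min_def)
  ultimately have "y \<in> capped_simplex m" "z \<in> capped_simplex m"
    using x unfolding capped_simplex_def by auto
  moreover have "fractional_coords y \<subset> fractional_coords x" "fractional_coords z \<subset> fractional_coords x"
    using frac \<open>i' \<noteq> i\<close> i i' unfolding fractional_coords_def y_def z_def d_def tp_def tm_def
    by (auto simp: min_def split: if_splits)
  moreover have "x = (\<lambda>j. u * y j + (1 - u) * z j)"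
  proof
    fix j
    have "u * y j + (1 - u) * z j = x j + (u * tp - (1 - u) * tm) * d j"
      unfolding y_def z_def by (simp add: algebra_simps)
    also have "u * tp - (1 - u) * tm = 0"
      using tp tm unfolding u_def by (simp add: field_simps)
    finally show "x j = u * y j + (1 - u) * z j"
      by simp
  qed
  moreover have "0 \<le> u" "u \<le> 1"
    using tp tm unfolding u_def by auto
  ultimately show ?thesis using that by blast
qed

(* The other coordinates are 0 or 1, so their sum is an integer below m: rounding x i up keeps
   the sum at most m. *)
lemma capped_simplex_split_one:
  fixes x :: "'a::finite \<Rightarrow> real"
  assumes x: "x \<in> capped_simplex m" and frac: "fractional_coords x = {i}"
  obtains u y z where "0 \<le> u" "u \<le> 1" "x = (\<lambda>j. u * y j + (1 - u) * z j)"
    "y \<in> capped_simplex m" "z \<in> capped_simplex m"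
    "fractional_coords y \<subset> fractional_coords x" "fractional_coords z \<subset> fractional_coords x"
proof -
  define y where "y = x(i := 1)"
  define z where "z = x(i := 0)"
  define ones where "ones = {j. j \<noteq> i \<and> x j = 1}"
  have box: "0 \<le> x j" "x j \<le> 1" for j
    using x unfolding capped_simplex_def by auto
  have xi: "0 < x i" "x i < 1"
    using frac unfolding fractional_coords_def by auto
  have integral: "x j = of_bool (j \<in> ones)" if "j \<noteq> i" for j
    using box[of j] frac that unfolding fractional_coords_def ones_def by fastforce
  have rest: "sum x (UNIV - {i}) = real (card ones)"
  proof -
    have "sum x (UNIV - {i}) = (\<Sum>j\<in>UNIV - {i}. of_bool (j \<in> ones))"
      by (rule sum.cong) (auto simp: integral)
    also have "\<dots> = real (card ((UNIV - {i}) \<inter> ones))"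
      by simp
    also have "(UNIV - {i}) \<inter> ones = ones"
      unfolding ones_def by auto
    finally show ?thesis .
  qed
  have "real (card ones) < real m"
    using x xi rest sum.remove[of UNIV i x] unfolding capped_simplex_def by simp
  then have "real (card ones) + 1 \<le> real m"
    by (metis Suc_eq_plus1 Suc_leI of_nat_1 of_nat_add of_nat_le_iff of_nat_less_iff)
  moreover have "sum y UNIV = 1 + real (card ones)" "sum z UNIV = real (card ones)"
    using sum.remove[of UNIV i y] sum.remove[of UNIV i z] rest
    unfolding y_def z_def by (simp_all add: sum.cong[OF refl, of "UNIV - {i}" "x(i := _)" x])
  ultimately have "y \<in> capped_simplex m" "z \<in> capped_simplex m"
    using box unfolding capped_simplex_def y_def z_def by auto
  moreover have "fractional_coords y \<subset> fractional_coords x" "fractional_coords z \<subset> fractional_coords x"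
    using frac unfolding fractional_coords_def y_def z_def by auto
  moreover have "x = (\<lambda>j. x i * y j + (1 - x i) * z j)"
    unfolding y_def z_def by (auto simp: fun_eq_iff algebra_simps)
  ultimately show ?thesis
    using that xi by (meson less_eq_real_def)
qed

lemma capped_simplex_split:
  fixes x :: "'a::finite \<Rightarrow> real"
  assumes x: "x \<in> capped_simplex m" and frac: "fractional_coords x \<noteq> {}"
  obtains u y z where "0 \<le> u" "u \<le> 1" "x = (\<lambda>j. u * y j + (1 - u) * z j)"
    "y \<in> capped_simplex m" "z \<in> capped_simplex m"
    "fractional_coords y \<subset> fractional_coords x" "fractional_coords z \<subset> fractional_coords x"
proof -
  obtain i where i: "i \<in> fractional_coords x"
    using frac by blast
  show ?thesis
  proof (cases "fractional_coords x = {i}")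
    case True
    then show ?thesis using capped_simplex_split_one[OF x] that by blast
  next
    case False
    then obtain i' where "i' \<in> fractional_coords x" "i' \<noteq> i"
      using i by blast
    then show ?thesis using capped_simplex_split_two[OF x i] that by blast
  qed
qed

lemma convex_le_on_capped_simplex:
  fixes F :: "('a::finite \<Rightarrow> real) \<Rightarrow> real"
  assumes convex: "\<And>x y u. 0 \<le> u \<Longrightarrow> u \<le> 1 \<Longrightarrow>
      F (\<lambda>j. u * x j + (1 - u) * y j) \<le> u * F x + (1 - u) * F y"
    and vertex: "\<And>J. card J \<le> m \<Longrightarrow> F (\<lambda>j. of_bool (j \<in> J)) \<le> C"
    and x: "x \<in> capped_simplex m"
  shows "F x \<le> C"
  using x
proof (induction "card (fractional_coords x)" arbitrary: x rule: less_induct)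
  case less
  show ?case
  proof (cases "fractional_coords x = {}")
    case True
    define J where "J = {j. x j = 1}"
    have "x j = of_bool (j \<in> J)" for j
    proof -
      have "0 \<le> x j" "x j \<le> 1" "\<not> (0 < x j \<and> x j < 1)"
        using True less.prems unfolding fractional_coords_def capped_simplex_def by auto
      then show ?thesis
        unfolding J_def by auto
    qed
    then have "x = (\<lambda>j. of_bool (j \<in> J))" and "real (card J) \<le> real m"
      using less.prems unfolding capped_simplex_def by (auto simp: fun_eq_iff)
    then show ?thesis
      using vertex by simp
  next
    case False
    then obtain u y z where u: "0 \<le> u" "u \<le> 1" and xyz: "x = (\<lambda>j. u * y j + (1 - u) * z j)"
      and yz: "y \<in> capped_simplex m" "z \<in> capped_simplex m"
      and smaller: "fractional_coords y \<subset> fractional_coords x" "fractional_coords z \<subset> fractional_coords x"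
      using capped_simplex_split[OF less.prems] by blast
    have "F y \<le> C" "F z \<le> C"
      using less.hyps[OF psubset_card_mono[OF finite smaller(1)] yz(1)]
            less.hyps[OF psubset_card_mono[OF finite smaller(2)] yz(2)] by auto
    have "F x \<le> u * F y + (1 - u) * F z"
      using convex[OF u, of y z] xyz by simp
    also have "\<dots> \<le> u * C + (1 - u) * C"
      using u \<open>F y \<le> C\<close> \<open>F z \<le> C\<close> by (intro add_mono mult_left_mono) auto
    finally show ?thesis
      by (simp add: algebra_simps)
  qed
qed

definition conv_excess :: "('a::{finite,ab_group_add} \<Rightarrow> real) \<Rightarrow> ('a \<Rightarrow> real) \<Rightarrow> real" where
  "conv_excess \<psi> x = (\<Sum>t\<in>UNIV. max (\<Sum>j\<in>UNIV. x j * \<psi> (t - j)) 0)"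

lemma max_0_convex:
  fixes A B u :: real
  assumes "0 \<le> u" "u \<le> 1"
  shows "max (u * A + (1 - u) * B) 0 \<le> u * max A 0 + (1 - u) * max B 0"
proof -
  have "u * A \<le> u * max A 0" "(1 - u) * B \<le> (1 - u) * max B 0"
    using assms by (intro mult_left_mono; simp)+
  moreover have "0 \<le> u * max A 0" "0 \<le> (1 - u) * max B 0"
    using assms by simp_all
  ultimately show ?thesis
    by linarith
qed

lemma conv_excess_convex:
  assumes "0 \<le> u" "u \<le> 1"
  shows "conv_excess \<psi> (\<lambda>j. u * x j + (1 - u) * y j) \<le> u * conv_excess \<psi> x + (1 - u) * conv_excess \<psi> y"
proof -
  define X where "X t = (\<Sum>j\<in>UNIV. x j * \<psi> (t - j))" for t
  define Y where "Y t = (\<Sum>j\<in>UNIV. y j * \<psi> (t - j))" for t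
  have "(\<Sum>j\<in>UNIV. (u * x j + (1 - u) * y j) * \<psi> (t - j))
      = (\<Sum>j\<in>UNIV. u * (x j * \<psi> (t - j)) + (1 - u) * (y j * \<psi> (t - j)))" for t
    by (rule sum.cong) (simp_all add: algebra_simps)
  also have "\<dots> t = u * X t + (1 - u) * Y t" for t
    unfolding X_def Y_def by (simp only: sum.distrib sum_distrib_left)
  finally have "conv_excess \<psi> (\<lambda>j. u * x j + (1 - u) * y j) = (\<Sum>t\<in>UNIV. max (u * X t + (1 - u) * Y t) 0)"
    unfolding conv_excess_def by simp
  also have "\<dots> \<le> (\<Sum>t\<in>UNIV. u * max (X t) 0 + (1 - u) * max (Y t) 0)"
    by (intro sum_mono max_0_convex assms)
  also have "\<dots> = u * conv_excess \<psi> x + (1 - u) * conv_excess \<psi> y"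
    unfolding conv_excess_def X_def Y_def by (simp add: sum.distrib sum_distrib_left)
  finally show ?thesis .
qed

lemma conv_excess_scale:
  assumes "0 \<le> c"
  shows "conv_excess \<psi> (\<lambda>j. c * x j) = c * conv_excess \<psi> x"
proof -
  define X where "X t = (\<Sum>j\<in>UNIV. x j * \<psi> (t - j))" for t
  have "conv_excess \<psi> (\<lambda>j. c * x j) = (\<Sum>t\<in>UNIV. max (c * X t) 0)"
    unfolding conv_excess_def X_def by (simp add: sum_distrib_left mult.assoc)
  also have "\<dots> = (\<Sum>t\<in>UNIV. c * max (X t) 0)"
    using assms by (intro sum.cong) (auto simp: max_def mult_le_0_iff)
  also have "\<dots> = c * conv_excess \<psi> x"
    unfolding conv_excess_def X_def by (simp add: sum_distrib_left)
  finally show ?thesis .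
qed

lemma conv_excess_le_by_vertices:
  fixes \<psi> a :: "'a::{finite,ab_group_add} \<Rightarrow> real"
  assumes vertex: "\<And>J. card J \<le> m \<Longrightarrow> conv_excess \<psi> (\<lambda>j. of_bool (j \<in> J)) \<le> C"
    and m: "0 < m" and a: "\<And>j. 0 \<le> a j"
    and sup: "\<And>j. real m * a j \<le> M" and l1: "sum a UNIV \<le> M"
  shows "conv_excess \<psi> a \<le> C / m * M"
proof (cases "M = 0")
  case True
  then have "a = (\<lambda>j. 0 * a j)"
    using a sup m by (auto simp: fun_eq_iff intro: antisym) (smt (verit) mult_pos_pos of_nat_0_less_iff)
  then show ?thesis
    using True conv_excess_scale[of 0 \<psi> a] by simp
next
  case False
  then have M: "0 < M"
    using a[of undefined] sup[of undefined] m by (smt (verit) mult_nonneg_nonneg of_nat_0_le_iff)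
  define x where "x j = m / M * a j" for j
  have "x \<in> capped_simplex m"
    unfolding capped_simplex_def x_def
  proof (intro CollectI conjI allI)
    fix j
    show "0 \<le> m / M * a j"
      using a M by simp
    show "m / M * a j \<le> 1"
      using sup[of j] M by (simp add: field_simps)
    have "(\<Sum>j\<in>UNIV. m / M * a j) = m / M * sum a UNIV"
      by (simp add: sum_distrib_left)
    also have "\<dots> \<le> m / M * M"
      using l1 M by (intro mult_left_mono) auto
    finally show "(\<Sum>j\<in>UNIV. m / M * a j) \<le> real m"
      using M by simp
  qed
  then have "conv_excess \<psi> x \<le> C"
    using convex_le_on_capped_simplex[of "conv_excess \<psi>" m C x] conv_excess_convex vertex by blast
  have "a = (\<lambda>j. M / m * x j)"
    using M m unfolding x_def by (auto simp: fun_eq_iff)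
  then have "conv_excess \<psi> a = M / m * conv_excess \<psi> x"
    using conv_excess_scale[of "M / m" \<psi> x] M by simp
  also have "\<dots> \<le> M / m * C"
    using \<open>conv_excess \<psi> x \<le> C\<close> M by (intro mult_left_mono) auto
  finally show ?thesis
    by (simp add: field_simps)
qed

lemma of_nat_mod_24: "(of_nat (n mod 24) :: 24) = of_nat n"
proof -
  have "(of_nat n :: 24) = of_nat (n mod 24) + 24 * of_nat (n div 24)"
    by (metis of_nat_add of_nat_mult of_nat_numeral mod_mult_div_eq)
  also have "(24::24) = 0"
    by simp
  finally show ?thesis
    by simp
qed

lemma inj_on_of_nat_24: "inj_on (of_nat :: nat \<Rightarrow> 24) {..<24}"
proof (rule inj_onI)
  have eq: "i = j" if "(of_nat (j - i) :: 24) = 0" "i \<le> j" "j < 24" for i j :: nat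
    using that unfolding of_nat_eq_0_iff_char_dvd by (auto dest: dvd_imp_le)
  fix i j assume "i \<in> {..<24}" "j \<in> {..<24}" "(of_nat i :: 24) = of_nat j"
  then show "i = j"
    using eq[of j i] eq[of i j] by (cases "i \<le> j") (auto simp: of_nat_diff)
qed

lemma sum_UNIV_24: "(\<Sum>t\<in>UNIV. g t) = (\<Sum>i<24. g (of_nat i :: 24))"
proof -
  have "of_nat ` {..<24} = (UNIV :: 24 set)"
    using inj_on_of_nat_24 by (intro card_subset_eq) (simp_all add: card_image)
  then show ?thesis
    using sum.reindex[OF inj_on_of_nat_24, of g] by simp
qed

lemma sum_lessThan_24_expand:
  "(\<Sum>i<(24::nat). g i) = g 0 + g 1 + g 2 + g 3 + g 4 + g 5 + g 6 + g 7 + g 8 + g 9 + g 10 + g 11 +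
     g 12 + g 13 + g 14 + g 15 + g 16 + g 17 + g 18 + g 19 + g 20 + g 21 + g 22 + (g 23 :: 'a::comm_monoid_add)"
  by (simp add: lessThan_nat_numeral add_ac)

(* simp decides equations between numerals of type 24 but does not reduce a numeral modulo 24,
   so the squares are tabulated. *)
lemma squares_24:
  "(2::24)^2 = 4" "(3::24)^2 = 9" "(4::24)^2 = 16" "(5::24)^2 = 1" "(6::24)^2 = 12" "(7::24)^2 = 1"
  "(8::24)^2 = 16" "(9::24)^2 = 9" "(10::24)^2 = 4" "(11::24)^2 = 1" "(12::24)^2 = 0" "(13::24)^2 = 1"
  "(14::24)^2 = 4" "(15::24)^2 = 9" "(16::24)^2 = 16" "(17::24)^2 = 1" "(18::24)^2 = 12" "(19::24)^2 = 1"
  "(20::24)^2 = 16" "(21::24)^2 = 9" "(22::24)^2 = 4" "(23::24)^2 = 1"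
  by simp_all

lemma f24_eq:
  "f24 s = 2 * of_bool (s = 0) + 8 * of_bool (s = 1) + 4 * of_bool (s = 4) + 4 * of_bool (s = 9) +
     2 * of_bool (s = 12) + 4 * of_bool (s = 16)"
proof -
  have "f24 s = (\<Sum>j\<in>UNIV. of_bool (j ^ 2 = s))"
    unfolding f24_def by simp
  also have "\<dots> = (\<Sum>i<24. of_bool ((of_nat i :: 24) ^ 2 = s))"
    by (rule sum_UNIV_24)
  also have "\<dots> = 2 * of_bool (s = 0) + 8 * of_bool (s = 1) + 4 * of_bool (s = 4) + 4 * of_bool (s = 9) +
      2 * of_bool (s = 12) + 4 * of_bool (s = 16)"
    unfolding sum_lessThan_24_expand of_nat_numeral squares_24 by (simp add: eq_commute[of _ s])
  finally show ?thesis .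
qed

definition psi24 :: "24 \<Rightarrow> real" where
  "psi24 t = 80 - 66 * f24 t"

lemma sum_indicator_psi24:
  "(\<Sum>j\<in>UNIV. of_bool (j \<in> J) * psi24 (t - j)) =
     80 * real (card J) - 66 * (2 * of_bool (t \<in> J) + 2 * of_bool (t + 12 \<in> J) + 4 * of_bool (t + 8 \<in> J) +
       4 * of_bool (t + 20 \<in> J) + 4 * of_bool (t + 15 \<in> J) + 8 * of_bool (t + 23 \<in> J))"
proof -
  have delta: "(\<Sum>j\<in>UNIV. of_bool (j \<in> J) * of_bool (t - j = c)) = (of_bool (t - c \<in> J) :: real)" for c
  proof -
    have "(\<Sum>j\<in>UNIV. of_bool (j \<in> J) * of_bool (t - j = c)) = (\<Sum>j\<in>UNIV. if j = t - c then of_bool (j \<in> J) else (0::real))"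
      by (rule sum.cong) (auto simp: eq_diff_eq diff_eq_eq)
    then show ?thesis
      by simp
  qed
  have "t - 0 = t" "t - 12 = t + 12" "t - 16 = t + 8" "t - 4 = t + 20" "t - 9 = t + 15" "t - 1 = t + 23"
    by (simp_all add: diff_eq_eq add.assoc)
  with delta[of 0] delta[of 1] delta[of 4] delta[of 9] delta[of 12] delta[of 16] show ?thesis
    unfolding psi24_def f24_eq
    by (simp add: sum_subtractf sum.distrib sum_distrib_left algebra_simps)
qed

definition vertex_excess :: "nat \<Rightarrow> nat \<Rightarrow> int" where
  "vertex_excess l n = max (80 * int l - 66 * int n) 0"

definition triple_excess :: "nat \<Rightarrow> nat \<Rightarrow> nat \<Rightarrow> nat \<Rightarrow> nat \<Rightarrow> nat \<Rightarrow> nat \<Rightarrow> int" where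
  "triple_excess l s0 s1 s2 x0 x1 x2 =
     vertex_excess l (2 * s0 + 4 * s2 + 4 * x0 + 8 * x2) +
     vertex_excess l (2 * s1 + 4 * s0 + 4 * x1 + 8 * x0) +
     vertex_excess l (2 * s2 + 4 * s1 + 4 * x2 + 8 * x1)"

(* Tables of upper bounds, computed offline and verified by exhaustive case analysis below. *)
definition triple_cert :: "nat \<Rightarrow> nat \<Rightarrow> nat \<Rightarrow> int" where
  "triple_cert l p a =
    (if l = 0 then [[0, 0, 0, 0], [0, 0, 0, 0], [0, 0, 0, 0], [0, 0, 0, 0], [0, 0, 0, 0], [0, 0, 0, 0], [0, 0, 0, 0]] else
     if l = 1 then [[240, 80, 0, 0], [80, 80, 0, 0], [80, 80, 0, 0], [0, 0, 0, 0], [0, 0, 0, 0], [0, 0, 0, 0], [0, 0, 0, 0]] else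
     if l = 2 then [[480, 160, 0, 0], [188, 160, 0, 0], [160, 160, 0, 0], [28, 28, 0, 0], [0, 0, 0, 0], [0, 0, 0, 0], [0, 0, 0, 0]] else
     if l = 3 then [[720, 240, 0, 0], [348, 240, 0, 0], [240, 240, 0, 0], [108, 108, 0, 0], [0, 0, 0, 0], [0, 0, 0, 0], [0, 0, 0, 0]] else
     if l = 4 then [[960, 376, 56, 0], [564, 320, 56, 0], [376, 320, 56, 0], [188, 188, 0, 0], [56, 56, 0, 0], [0, 0, 0, 0], [0, 0, 0, 0]] else
     if l = 5 then [[1200, 536, 136, 0], [804, 404, 136, 0], [536, 400, 136, 0], [272, 268, 4, 0], [136, 136, 0, 0], [0, 0, 0, 0], [0, 0, 0, 0]] else
     if l = 6 then [[1440, 696, 216, 0], [1044, 564, 216, 0], [696, 480, 216, 0], [432, 348, 84, 0], [216, 216, 0, 0], [0, 0, 0, 0], [0, 0, 0, 0]] else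
     if l = 7 then [[1680, 888, 328, 0], [1284, 724, 296, 0], [888, 592, 296, 0], [592, 428, 164, 0], [328, 296, 32, 0], [32, 32, 0, 0], [0, 0, 0, 0]] else
     if l = 8 then [[1920, 1128, 488, 0], [1524, 884, 376, 0], [1128, 752, 376, 0], [752, 508, 244, 0], [488, 376, 112, 0], [112, 112, 0, 0], [0, 0, 0, 0]] else
     [[2160, 1368, 648, 0], [1764, 1044, 516, 0], [1368, 912, 456, 0], [972, 648, 324, 0], [648, 456, 192, 0], [252, 192, 0, 0], [0, 0, 0, 0]]) ! p ! a"

definition pair_cert :: "nat \<Rightarrow> nat \<Rightarrow> nat \<Rightarrow> int" where
  "pair_cert l p q =
    (if l = 0 then [[0, 0, 0, 0, 0, 0, 0], [0, 0, 0, 0, 0, 0, 0], [0, 0, 0, 0, 0, 0, 0], [0, 0, 0, 0, 0, 0, 0], [0, 0, 0, 0, 0, 0, 0], [0, 0, 0, 0, 0, 0, 0], [0, 0, 0, 0, 0, 0, 0]] else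
     if l = 1 then [[480, 320, 240, 240, 80, 0, 0], [160, 160, 160, 80, 80, 0, 0], [160, 160, 160, 80, 80, 0, 0], [0, 0, 0, 0, 0, 0, 0], [0, 0, 0, 0, 0, 0, 0], [0, 0, 0, 0, 0, 0, 0], [0, 0, 0, 0, 0, 0, 0]] else
     if l = 2 then [[960, 640, 480, 480, 160, 0, 0], [376, 348, 320, 188, 160, 0, 0], [320, 320, 320, 160, 160, 0, 0], [56, 56, 56, 28, 28, 0, 0], [0, 0, 0, 0, 0, 0, 0], [0, 0, 0, 0, 0, 0, 0], [0, 0, 0, 0, 0, 0, 0]] else
     if l = 3 then [[1440, 960, 720, 720, 240, 0, 0], [696, 588, 480, 348, 240, 0, 0], [480, 480, 480, 240, 240, 0, 0], [216, 216, 216, 108, 108, 0, 0], [0, 0, 0, 0, 0, 0, 0], [0, 0, 0, 0, 0, 0, 0], [0, 0, 0, 0, 0, 0, 0]] else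
     if l = 4 then [[1920, 1336, 1016, 960, 376, 56, 0], [1128, 884, 640, 564, 320, 56, 0], [752, 696, 640, 376, 320, 56, 0], [376, 376, 376, 188, 188, 0, 0], [112, 112, 112, 56, 56, 0, 0], [0, 0, 0, 0, 0, 0, 0], [0, 0, 0, 0, 0, 0, 0]] else
     if l = 5 then [[2400, 1736, 1336, 1200, 536, 136, 0], [1608, 1208, 940, 804, 404, 136, 0], [1072, 936, 800, 536, 400, 136, 0], [544, 540, 536, 272, 268, 4, 0], [272, 272, 272, 136, 136, 0, 0], [0, 0, 0, 0, 0, 0, 0], [0, 0, 0, 0, 0, 0, 0]] else
     if l = 6 then [[2880, 2136, 1656, 1440, 696, 216, 0], [2088, 1608, 1260, 1044, 564, 216, 0], [1392, 1176, 960, 696, 480, 216, 0], [864, 780, 696, 432, 348, 84, 0], [432, 432, 432, 216, 216, 0, 0], [0, 0, 0, 0, 0, 0, 0], [0, 0, 0, 0, 0, 0, 0]] else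
     if l = 7 then [[3360, 2568, 2008, 1680, 888, 328, 0], [2568, 2008, 1580, 1284, 724, 296, 0], [1776, 1480, 1184, 888, 592, 296, 0], [1184, 1020, 856, 592, 428, 164, 0], [656, 624, 592, 328, 296, 32, 0], [64, 64, 64, 32, 32, 0, 0], [0, 0, 0, 0, 0, 0, 0]] else
     if l = 8 then [[3840, 3048, 2408, 1920, 1128, 488, 0], [3048, 2408, 1900, 1524, 884, 376, 0], [2256, 1880, 1504, 1128, 752, 376, 0], [1504, 1260, 1016, 752, 508, 244, 0], [976, 864, 752, 488, 376, 112, 0], [224, 224, 224, 112, 112, 0, 0], [0, 0, 0, 0, 0, 0, 0]] else
     [[4320, 3528, 2808, 2160, 1368, 648, 0], [3528, 2808, 2280, 1764, 1044, 516, 0], [2736, 2280, 1824, 1368, 912, 456, 0], [1944, 1620, 1296, 972, 648, 324, 0], [1296, 1104, 912, 648, 456, 192, 0], [504, 444, 384, 252, 192, 0, 0], [0, 0, 0, 0, 0, 0, 0]]) ! p ! q"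

lemma nat_le_cases:
  "(n::nat) \<le> 1 \<Longrightarrow> n = 0 \<or> n = 1"
  "(n::nat) \<le> 2 \<Longrightarrow> n = 0 \<or> n = 1 \<or> n = 2"
  "(n::nat) \<le> 3 \<Longrightarrow> n = 0 \<or> n = 1 \<or> n = 2 \<or> n = 3"
  "(n::nat) \<le> 6 \<Longrightarrow> n = 0 \<or> n = 1 \<or> n = 2 \<or> n = 3 \<or> n = 4 \<or> n = 5 \<or> n = 6"
  "(n::nat) \<le> 9 \<Longrightarrow> n = 0 \<or> n = 1 \<or> n = 2 \<or> n = 3 \<or> n = 4 \<or> n = 5 \<or> n = 6 \<or> n = 7 \<or> n = 8 \<or> n = 9"
  by auto

lemma triple_excess_le_cert:
  "s0 \<le> 2 \<Longrightarrow> s1 \<le> 2 \<Longrightarrow> s2 \<le> 2 \<Longrightarrow> x0 \<le> 1 \<Longrightarrow> x1 \<le> 1 \<Longrightarrow> x2 \<le> 1 \<Longrightarrow> l \<le> 9 \<Longrightarrow>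
   triple_excess l s0 s1 s2 x0 x1 x2 \<le> triple_cert l (s0 + s1 + s2) (x0 + x1 + x2)"
  by (drule nat_le_cases)+ (elim disjE; simp add: triple_excess_def vertex_excess_def triple_cert_def)

lemma triple_cert_pair_le:
  "p \<le> 6 \<Longrightarrow> a \<le> 3 \<Longrightarrow> c \<le> 3 \<Longrightarrow> l \<le> 9 \<Longrightarrow>
   triple_cert l p a + triple_cert l p c \<le> pair_cert l p (a + c)"
  by (drule nat_le_cases)+ (elim disjE; simp add: triple_cert_def pair_cert_def)

lemma pair_cert_cycle_le:
  "m0 \<le> 6 \<Longrightarrow> m1 \<le> 6 \<Longrightarrow> m2 \<le> 6 \<Longrightarrow> m3 \<le> 6 \<Longrightarrow> m0 + m1 + m2 + m3 \<le> 9 \<Longrightarrow>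
   pair_cert (m0 + m1 + m2 + m3) m0 m3 + pair_cert (m0 + m1 + m2 + m3) m1 m0 +
   pair_cert (m0 + m1 + m2 + m3) m2 m1 + pair_cert (m0 + m1 + m2 + m3) m3 m2 \<le> 6480"
  by (drule nat_le_cases(4))+ (elim disjE; simp add: pair_cert_def)

(* The count at a point t = r (mod 4) sees only the pair sums S u = b u + b (u + 12) of the
   class of r and the single values of b on the class of r - 1.  Grouping the 24 points by class
   and by their half of Z/24 yields the four class contributions T r, coupled cyclically. *)
lemma vertex_excess_regroup:
  fixes b :: "nat \<Rightarrow> nat" and l :: nat
  defines "S r \<equiv> b r + b ((r + 12) mod 24)"
  defines "T r \<equiv> triple_excess l (S r) (S ((r + 16) mod 24)) (S ((r + 8) mod 24))
                  (b ((r + 15) mod 24)) (b ((r + 7) mod 24)) (b ((r + 23) mod 24)) +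
               triple_excess l (S r) (S ((r + 16) mod 24)) (S ((r + 8) mod 24))
                  (b ((r + 3) mod 24)) (b ((r + 19) mod 24)) (b ((r + 11) mod 24))"
  shows "(\<Sum>i<24. vertex_excess l (2 * b i + 2 * b ((i + 12) mod 24) + 4 * b ((i + 8) mod 24) +
            4 * b ((i + 20) mod 24) + 4 * b ((i + 15) mod 24) + 8 * b ((i + 23) mod 24)))
         = T 0 + T 9 + T 18 + T 3"
  unfolding T_def S_def triple_excess_def sum_lessThan_24_expand
  by simp (simp only: One_nat_def[symmetric] add_ac mult_ac distrib_left)

lemma class_pair_le:
  assumes "s0 \<le> 2" "s1 \<le> 2" "s2 \<le> 2" "x0 \<le> 1" "x1 \<le> 1" "x2 \<le> 1" "y0 \<le> 1" "y1 \<le> 1" "y2 \<le> 1" "l \<le> 9"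
  shows "triple_excess l s0 s1 s2 x0 x1 x2 + triple_excess l s0 s1 s2 y0 y1 y2
    \<le> pair_cert l (s0 + s1 + s2) (x0 + x1 + x2 + (y0 + y1 + y2))"
proof -
  have "triple_excess l s0 s1 s2 x0 x1 x2 + triple_excess l s0 s1 s2 y0 y1 y2
      \<le> triple_cert l (s0 + s1 + s2) (x0 + x1 + x2) + triple_cert l (s0 + s1 + s2) (y0 + y1 + y2)"
    using assms by (intro add_mono triple_excess_le_cert)
  also have "\<dots> \<le> pair_cert l (s0 + s1 + s2) (x0 + x1 + x2 + (y0 + y1 + y2))"
    using assms by (intro triple_cert_pair_le) auto
  finally show ?thesis .
qed

lemma vertex_excess_sum_le:
  fixes b :: "nat \<Rightarrow> nat"
  assumes b: "\<And>k. b k \<le> 1" and l: "(\<Sum>k<24. b k) \<le> 9"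
  shows "(\<Sum>i<24. vertex_excess (\<Sum>k<24. b k) (2 * b i + 2 * b ((i + 12) mod 24) + 4 * b ((i + 8) mod 24) +
            4 * b ((i + 20) mod 24) + 4 * b ((i + 15) mod 24) + 8 * b ((i + 23) mod 24))) \<le> 6480"
    (is "?lhs \<le> _")
proof -
  define l where "l = (\<Sum>k<24. b k)"
  define S where "S r = b r + b ((r + 12) mod 24)" for r
  define M where "M r = S r + S ((r + 16) mod 24) + S ((r + 8) mod 24)" for r
  define T where "T r = triple_excess l (S r) (S ((r + 16) mod 24)) (S ((r + 8) mod 24))
                  (b ((r + 15) mod 24)) (b ((r + 7) mod 24)) (b ((r + 23) mod 24)) +
               triple_excess l (S r) (S ((r + 16) mod 24)) (S ((r + 8) mod 24))
                  (b ((r + 3) mod 24)) (b ((r + 19) mod 24)) (b ((r + 11) mod 24))" for r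
  have S: "S r \<le> 2" for r
    using b[of r] b[of "(r + 12) mod 24"] unfolding S_def by simp
  have M: "M r \<le> 6" for r
    using S[of r] S[of "(r + 16) mod 24"] S[of "(r + 8) mod 24"] unfolding M_def by simp
  have T: "T r \<le> pair_cert l (M r) (b ((r + 15) mod 24) + b ((r + 7) mod 24) + b ((r + 23) mod 24) +
                 (b ((r + 3) mod 24) + b ((r + 19) mod 24) + b ((r + 11) mod 24)))" for r
    unfolding T_def M_def using l b S unfolding l_def[symmetric] by (intro class_pair_le) auto
  have prev: "b ((r + 15) mod 24) + b ((r + 7) mod 24) + b ((r + 23) mod 24) +
      (b ((r + 3) mod 24) + b ((r + 19) mod 24) + b ((r + 11) mod 24)) = M r'"
    if "(r, r') \<in> {(0, 3), (9, 0), (18, 9), (3, 18)}" for r r'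
    using that unfolding M_def S_def by auto
  have l_eq: "l = M 0 + M 9 + M 18 + M 3"
    unfolding l_def M_def S_def sum_lessThan_24_expand by simp
  have "?lhs = T 0 + T 9 + T 18 + T 3"
    unfolding l_def[symmetric] T_def S_def by (rule vertex_excess_regroup)
  also have "\<dots> \<le> pair_cert l (M 0) (M 3) + pair_cert l (M 9) (M 0) + pair_cert l (M 18) (M 9) +
      pair_cert l (M 3) (M 18)"
    using T[of 0] T[of 9] T[of 18] T[of 3] prev[of 0 3] prev[of 9 0] prev[of 18 9] prev[of 3 18] by simp
  also have "\<dots> \<le> 6480"
    using pair_cert_cycle_le[of "M 0" "M 9" "M 18" "M 3"] M l unfolding l_def[symmetric] l_eq by simp
  finally show ?thesis .
qed

lemma conv_excess_psi24_indicator_le: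
  assumes "card J \<le> 9"
  shows "conv_excess psi24 (\<lambda>j. of_bool (j \<in> J)) \<le> 6480"
proof -
  define b where "b k = (of_bool (of_nat k \<in> J) :: nat)" for k
  have card_J: "card J = (\<Sum>k<24. b k)"
  proof -
    have "card J = (\<Sum>j\<in>UNIV. of_bool (j \<in> J) :: nat)"
      by simp
    then show ?thesis
      unfolding sum_UNIV_24 b_def .
  qed
  have shift: "of_bool (of_nat i + of_nat c \<in> J) = real (b ((i + c) mod 24))" for i c
    unfolding b_def of_nat_mod_24 by simp
  have "conv_excess psi24 (\<lambda>j. of_bool (j \<in> J)) =
      (\<Sum>i<24. max (\<Sum>j\<in>UNIV. of_bool (j \<in> J) * psi24 (of_nat i - j)) 0)"
    unfolding conv_excess_def by (rule sum_UNIV_24)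
  also have "\<dots> = (\<Sum>i<24. max (80 * real (\<Sum>k<24. b k) - 66 * real (2 * b i + 2 * b ((i + 12) mod 24) +
        4 * b ((i + 8) mod 24) + 4 * b ((i + 20) mod 24) + 4 * b ((i + 15) mod 24) + 8 * b ((i + 23) mod 24))) 0)"
    unfolding sum_indicator_psi24 card_J
    using shift[of _ 12] shift[of _ 8] shift[of _ 20] shift[of _ 15] shift[of _ 23]
    by (simp add: b_def)
  also have "\<dots> = of_int (\<Sum>i<24. vertex_excess (\<Sum>k<24. b k) (2 * b i + 2 * b ((i + 12) mod 24) +
        4 * b ((i + 8) mod 24) + 4 * b ((i + 20) mod 24) + 4 * b ((i + 15) mod 24) + 8 * b ((i + 23) mod 24)))"
    unfolding vertex_excess_def by (simp add: of_int_max)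
  also have "\<dots> \<le> 6480"
    unfolding of_int_le_numeral_iff using assms unfolding card_J
    by (intro vertex_excess_sum_le) (simp_all add: b_def)
  finally show ?thesis .
qed

lemma NN_bounds_nonneg:
  assumes "\<And>t. 0 \<le> a t"
  shows "9 * a t \<le> NN a" and "sum a UNIV \<le> NN a"
proof -
  have "\<bar>a t\<bar> \<le> sup_norm24 a"
    unfolding sup_norm24_def by (rule Max_ge) auto
  then show "9 * a t \<le> NN a"
    using assms[of t] unfolding NN_def by simp
  show "sum a UNIV \<le> NN a"
    using assms unfolding NN_def l1_norm24_def by simp
qed

lemma conv_excess_psi24_le:
  assumes "\<And>t. 0 \<le> a t"
  shows "conv_excess psi24 a \<le> 720 * NN a"
proof -
  have "conv_excess psi24 a \<le> 6480 / real 9 * NN a"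
    using conv_excess_psi24_indicator_le assms NN_bounds_nonneg[of a, OF assms]
    by (intro conv_excess_le_by_vertices) auto
  then show ?thesis
    by simp
qed

lemma phi24_le_psi24: "phi24 s \<le> psi24 s / 15"
proof -
  have "11 / 5 \<le> sqrt (5::real)"
    by (rule real_le_rsqrt) (simp add: power2_eq_square)
  moreover have "0 \<le> f24 s"
    unfolding f24_def by simp
  ultimately have "22 / 5 * f24 s \<le> 2 * sqrt 5 * f24 s"
    by (intro mult_right_mono) auto
  then show ?thesis
    unfolding phi24_def psi24_def by simp
qed

lemma conv24_phi24_le_conv_psi24:
  assumes "\<And>t. 0 \<le> a t"
  shows "conv24 a phi24 t \<le> (\<Sum>j\<in>UNIV. a j * psi24 (t - j)) / 360"
proof -
  have "(\<Sum>j\<in>UNIV. a j * phi24 (t - j)) \<le> (\<Sum>j\<in>UNIV. a j * (psi24 (t - j) / 15))"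
    by (intro sum_mono mult_left_mono phi24_le_psi24 assms)
  then show ?thesis
    unfolding conv24_def by (simp add: sum_divide_distrib[symmetric])
qed

lemma conv24_phi24_le_l1:
  assumes "\<And>t. 0 \<le> a t"
  shows "conv24 a phi24 t \<le> 2 / 9 * sum a UNIV"
proof -
  have "(\<Sum>j\<in>UNIV. a j * phi24 (t - j)) \<le> (\<Sum>j\<in>UNIV. a j * (16 / 3))"
    unfolding phi24_def f24_def by (intro sum_mono mult_left_mono assms) simp
  also have "\<dots> = sum a UNIV * (16 / 3)"
    by (rule sum_distrib_right[symmetric])
  finally show ?thesis
    unfolding conv24_def by simp
qed

lemma NN_pospart_conv24_phi24_le:
  assumes a: "\<And>t. 0 \<le> a t"
  shows "NN (pospart (conv24 a phi24)) \<le> 2 * NN a"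
proof -
  have "l1_norm24 (pospart (conv24 a phi24)) = (\<Sum>t\<in>UNIV. max (conv24 a phi24 t) 0)"
    unfolding l1_norm24_def pospart_def by simp
  also have "\<dots> \<le> (\<Sum>t\<in>UNIV. max (\<Sum>j\<in>UNIV. a j * psi24 (t - j)) 0 / 360)"
  proof (rule sum_mono)
    fix t
    show "max (conv24 a phi24 t) 0 \<le> max (\<Sum>j\<in>UNIV. a j * psi24 (t - j)) 0 / 360"
      using conv24_phi24_le_conv_psi24[of a t, OF a] by (auto simp: max_def)
  qed
  also have "\<dots> = conv_excess psi24 a / 360"
    unfolding conv_excess_def by (simp add: sum_divide_distrib)
  also have "\<dots> \<le> 2 * NN a"
    using conv_excess_psi24_le[of a, OF a] by simp
  finally have l1: "l1_norm24 (pospart (conv24 a phi24)) \<le> 2 * NN a" .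
  have "0 \<le> sum a UNIV"
    using a by (simp add: sum_nonneg)
  then have "\<bar>max (conv24 a phi24 t) 0\<bar> \<le> 2 / 9 * sum a UNIV" for t
    using conv24_phi24_le_l1[of a t, OF a] by simp
  then have "sup_norm24 (pospart (conv24 a phi24)) \<le> 2 / 9 * sum a UNIV"
    unfolding sup_norm24_def pospart_def by (intro Max.boundedI) auto
  then show ?thesis
    using l1 NN_bounds_nonneg(2)[of a, OF a] unfolding NN_def[of "pospart _"] by simp
qed

lemma sum_UNIV_uminus: "(\<Sum>t\<in>UNIV. g (- t)) = (\<Sum>t\<in>(UNIV :: 'a::{finite,group_add} set). g t)"
  by (rule sum.reindex_bij_witness[of _ uminus uminus]) auto

lemma NN_reflect: "NN (\<lambda>t. h (- t)) = NN h"
proof -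
  have "range (\<lambda>t. \<bar>h (- t)\<bar>) = range (\<lambda>t. \<bar>h t\<bar>)"
    by (metis (no_types) image_image surj_def minus_minus)
  moreover have "l1_norm24 (\<lambda>t. h (- t)) = l1_norm24 h"
    unfolding l1_norm24_def by (rule sum_UNIV_uminus)
  ultimately show ?thesis
    unfolding NN_def sup_norm24_def by simp
qed

lemma conv24_phi24_tilde: "conv24 a phi24_tilde t = conv24 (\<lambda>j. a (- j)) phi24 (- t)"
proof -
  have "(\<Sum>j\<in>UNIV. a j * phi24_tilde (t - j)) = (\<Sum>j\<in>UNIV. a (- (- j)) * phi24 (- t - (- j)))"
    unfolding phi24_tilde_def by (simp add: algebra_simps)
  also have "\<dots> = (\<Sum>j\<in>UNIV. a (- j) * phi24 (- t - j))"
    by (rule sum_UNIV_uminus)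
  finally show ?thesis
    unfolding conv24_def by (rule arg_cong)
qed

theorem mainTheorem16:
  fixes a :: "24 \<Rightarrow> real"
  assumes "\<And>t. a t \<ge> 0"
  shows "NN (pospart (conv24 a phi24)) \<le> 2 * NN a \<and>
         NN (pospart (conv24 a phi24_tilde)) \<le> 2 * NN a"
proof
  show "NN (pospart (conv24 a phi24)) \<le> 2 * NN a"
    using NN_pospart_conv24_phi24_le assms .
  have "pospart (conv24 a phi24_tilde) = (\<lambda>t. pospart (conv24 (\<lambda>j. a (- j)) phi24) (- t))"
    by (simp add: fun_eq_iff pospart_def conv24_phi24_tilde)
  moreover have "NN (pospart (conv24 (\<lambda>j. a (- j)) phi24)) \<le> 2 * NN (\<lambda>j. a (- j))"
    using assms by (intro NN_pospart_conv24_phi24_le)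
  ultimately show "NN (pospart (conv24 a phi24_tilde)) \<le> 2 * NN a"
    by (simp add: NN_reflect)
qed

end
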